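(* For any two mm-spaces $X$ and $Y$, \[ d_{\mathrm{conc}}(X,Y)=\inf_{\pi\in\Pi(m_X,m_Y)} d_{\mathrm{conc}}^{\pi}(X,Y). \]
   Context: An mm-space is a complete separable metric space $(X,d_X)$ with a Borel probability measure $m_X$. $\Pi(m_X,m_Y)$: Borel probability measures on $X\times Y$ with marginals $m_X,m_Y$. $\mathcal{L}ip_1(X)$ is the set of 1-Lipschitz functions $X\to\mathbb R$. For a measure space $(Z,\mu)$ and measurable $f,g:Z\to\mathbb R$, $d_{\mathrm{KF}}^\mu(f,g):=\inf\{\varepsilon\ge0:\mu(\{|f-g|>\varepsilon\})\le\varepsilon\}$; $d_{\mathrm H}^{d_{\mathrm{KF}}^\mu}$ is the associated Hausdorff distance between sets of functions. $F^*G:=G\circ F$. $d_{\mathrm{conc}}^{\pi}(X,Y):=d_{\mathrm H}^{d_{\mathrm{KF}}^\pi}(\mathrm{pr}_1^*\mathcal{L}ip_1(X),\mathrm{pr}_2^*\mathcal{L}ip_1(Y))$. $I=[0,1)$ with Lebesgue measure $\mathcal L^1$; a parameter of $X$ is a Borel $\varphi:I\to X$ with $\varphi_*\mathcal L^1=m_X$. $d_{\mathrm{conc}}(X,Y):=\inf_{\varphi,\psi}d_{\mathrm H}^{d_{\mathrm{KF}}^{\mathcal L^1}}(\varphi^*\mathcal{L}ip_1(X),\psi^*\mathcal{L}ip_1(Y))$ over parameters $\varphi,\psi$ of $X,Y$. *)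

theory Defs
  imports "HOL-Probability.Probability"
begin

definition mm_space :: "'a::polish_space measure \<Rightarrow> bool" where
  "mm_space M \<longleftrightarrow> sets M = sets borel \<and> prob_space M"

definition lip1 :: "('a::metric_space \<Rightarrow> real) set" where
  "lip1 = {f. 1-lipschitz_on UNIV f}"

definition dKF :: "'z measure \<Rightarrow> ('z \<Rightarrow> real) \<Rightarrow> ('z \<Rightarrow> real) \<Rightarrow> real" where
  "dKF \<mu> f g = Inf {\<epsilon>. 0 \<le> \<epsilon> \<and> measure \<mu> {z \<in> space \<mu>. \<bar>f z - g z\<bar> > \<epsilon>} \<le> \<epsilon>}"

definition hausdorff_dist :: "('f \<Rightarrow> 'f \<Rightarrow> real) \<Rightarrow> 'f set \<Rightarrow> 'f set \<Rightarrow> real" where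
  "hausdorff_dist d A B =
     max (SUP a\<in>A. INF b\<in>B. d a b) (SUP b\<in>B. INF a\<in>A. d a b)"

definition couplings :: "'a::polish_space measure \<Rightarrow> 'b::polish_space measure \<Rightarrow> ('a \<times> 'b) measure set" where
  "couplings mX mY = {\<pi>. sets \<pi> = sets borel \<and> prob_space \<pi> \<and>
      distr \<pi> borel fst = mX \<and> distr \<pi> borel snd = mY}"

definition unitI :: "real measure" where
  "unitI = restrict_space lborel {0..<1}"

definition parameters :: "'a::polish_space measure \<Rightarrow> (real \<Rightarrow> 'a) set" where
  "parameters M = {\<phi>. \<phi> \<in> measurable unitI borel \<and> distr unitI borel \<phi> = M}"

definition dconc_pi :: "('a::polish_space \<times> 'b::polish_space) measure \<Rightarrow> real" where
  "dconc_pi \<pi> = hausdorff_dist (dKF \<pi>)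
      ((\<lambda>f. f \<circ> fst) ` (lip1 :: ('a \<Rightarrow> real) set))
      ((\<lambda>g. g \<circ> snd) ` (lip1 :: ('b \<Rightarrow> real) set))"

definition dconc :: "'a::polish_space measure \<Rightarrow> 'b::polish_space measure \<Rightarrow> real" where
  "dconc mX mY = Inf {hausdorff_dist (dKF unitI)
        ((\<lambda>f. f \<circ> \<phi>) ` (lip1 :: ('a \<Rightarrow> real) set))
        ((\<lambda>g. g \<circ> \<psi>) ` (lip1 :: ('b \<Rightarrow> real) set))
      | \<phi> \<psi>. \<phi> \<in> parameters mX \<and> \<psi> \<in> parameters mY}"

end

theory Submission
  imports Defs
begin

text \<open>Both infima range over the same values. Given parameters \<open>\<phi>\<close>, \<open>\<psi>\<close>, the joint law of
  \<open>(\<phi>, \<psi>)\<close> is a coupling, and since the Ky Fan distance is invariant under push-forward,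
  its \<open>dconc_pi\<close> is the Hausdorff distance between \<open>\<phi>\<^sup>*Lip\<^sub>1(X)\<close> and \<open>\<psi>\<^sup>*Lip\<^sub>1(Y)\<close>.
  Conversely a coupling is a Borel probability measure on the Polish space \<open>X \<times> Y\<close>, hence has
  a parameter \<open>\<kappa>\<close>, and the components of \<open>\<kappa>\<close> are parameters of \<open>X\<close> and \<open>Y\<close>. Existence of parameters: a Polish space embeds
  into \<open>\<real>\<close> by a Borel map with Borel left inverse, recording in base-4 digits which balls
  around a dense sequence contain the point, and every real distribution is the image of
  Lebesgue measure on \<open>(0, 1)\<close> under its quantile function.\<close>

instance prod :: (polish_space, polish_space) polish_space ..

lemma Cauchy_if_dist_Suc_le_geometric:
  fixes f :: "nat \<Rightarrow> 'a::metric_space"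
  assumes step: "\<And>n. dist (f n) (f (Suc n)) \<le> 2 * (1/2)^n"
  shows "Cauchy f"
proof -
  have telescope: "dist (f m) (f (m + k)) \<le> 4 * (1/2)^m - 4 * (1/2)^(m + k)" for m k
  proof (induction k)
    case (Suc k)
    have "dist (f m) (f (m + Suc k)) \<le> dist (f m) (f (m + k)) + dist (f (m + k)) (f (Suc (m + k)))"
      by (simp add: dist_triangle)
    also have "\<dots> \<le> 4 * (1/2)^m - 4 * (1/2)^(m + k) + 2 * (1/2)^(m + k)"
      using Suc step[of "m + k"] by linarith
    finally show ?case by simp
  qed simp
  have tail: "dist (f m) (f n) \<le> 4 * (1/2)^m" if "m \<le> n" for m n
  proof -
    have "dist (f m) (f n) \<le> 4 * (1/2)^m - 4 * (1/2)^n"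
      using telescope[of m "n - m"] that by simp
    moreover have "0 \<le> 4 * (1/2::real)^n" by simp
    ultimately show ?thesis by linarith
  qed
  show ?thesis
  proof (rule metric_CauchyI)
    fix e :: real assume "0 < e"
    then obtain M where M: "(1/2::real)^M < e/8"
      using real_arch_pow_inv[of "e/8" "1/2"] by auto
    have "dist (f m) (f n) < e" if "M \<le> m" "M \<le> n" for m n
    proof -
      have "dist (f m) (f n) \<le> dist (f M) (f m) + dist (f M) (f n)" by (rule dist_triangle3)
      also have "\<dots> \<le> 8 * (1/2)^M" using tail[OF \<open>M \<le> m\<close>] tail[OF \<open>M \<le> n\<close>] by simp
      finally show ?thesis using M by simp
    qed
    then show "\<exists>M. \<forall>m\<ge>M. \<forall>n\<ge>M. dist (f m) (f n) < e" by blast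
  qed
qed

lemma summable_quaternary_digits: "summable (\<lambda>j. if c j then 2 / 4 ^ Suc j else (0::real))"
proof (rule summable_comparison_test)
  have "(\<lambda>j. (1/2) * (1/4::real)^j) = (\<lambda>j. 2 / 4 ^ Suc j)"
    by (auto simp: power_divide field_simps)
  then show "summable (\<lambda>j. 2 / 4 ^ Suc j :: real)"
    using summable_mult[OF summable_geometric[of "1/4::real"], of "1/2"] by simp
qed auto

definition quaternary_digit :: "real \<Rightarrow> nat \<Rightarrow> bool" where
  "quaternary_digit y m \<longleftrightarrow> 1/2 \<le> frac (4^m * y)"

text \<open>Digits are 0 or 2 in base 4, so the tail after digit m contributes at most 1/6 and
  cannot carry into digit m.\<close>
lemma quaternary_digit_suminf:
  "quaternary_digit (\<Sum>j. if c j then 2 / 4 ^ Suc j else 0) m \<longleftrightarrow> c m"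
proof -
  define f where "f j = (if c j then 2 / 4 ^ Suc j else (0::real))" for j
  define g where "g i = (if c (i + m) then 2 / 4 ^ Suc i else (0::real))" for i
  have sf: "summable f" and sg: "summable g"
    unfolding f_def g_def by (rule summable_quaternary_digits)+
  have sg': "summable (\<lambda>i. g (Suc i))" using sg summable_Suc_iff by blast
  have head_int: "4^m * sum f {..<m} \<in> \<int>"
  proof -
    have "4^m * f j \<in> \<int>" if "j < m" for j
    proof -
      have "(4::real)^m = 4^(m - Suc j) * 4 ^ Suc j"
        using that by (metis Suc_leI le_add_diff_inverse2 power_add)
      then show ?thesis by (simp add: f_def)
    qed
    then show ?thesis by (auto simp: sum_distrib_left intro: Ints_sum)
  qed
  have "4^m * (\<Sum>i. f (i + m)) = (\<Sum>i. 4^m * f (i + m))"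
    using summable_ignore_initial_segment[OF sf, of m] by (simp add: suminf_mult)
  also have "(\<lambda>i. 4^m * f (i + m)) = g"
    by (auto simp: f_def g_def power_add field_simps)
  finally have shifted: "4^m * suminf f = 4^m * sum f {..<m} + suminf g"
    by (simp add: suminf_split_initial_segment[OF sf, of m] distrib_left)
  have g_split: "suminf g = (if c m then 1/2 else 0) + (\<Sum>i. g (Suc i))"
    using suminf_split_head[OF sg] by (simp add: g_def)
  have tail_nonneg: "0 \<le> (\<Sum>i. g (Suc i))"
    by (rule suminf_nonneg[OF sg']) (auto simp: g_def)
  have "(\<lambda>i. 2 / 4 ^ Suc (Suc i) :: real) sums ((1/8) * (1 / (1 - 1/4)))"
    using sums_mult[OF geometric_sums[of "1/4::real"], of "1/8"]
    by (simp add: power_divide field_simps)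
  then have tail_le: "(\<Sum>i. g (Suc i)) \<le> 1/6"
    using suminf_le[OF _ sg' sums_summable] sums_unique by (fastforce simp: g_def)
  have "frac (4^m * suminf f) = suminf g"
    using frac_add_int_left[OF head_int] shifted g_split tail_nonneg tail_le
    by (auto intro!: frac_eq_id)
  then show ?thesis
    using g_split tail_nonneg tail_le
    unfolding quaternary_digit_def f_def[abs_def, symmetric] by auto
qed

text \<open>Digit number \<open>prod_encode (n, k)\<close> of \<open>ball_code xs x\<close> records whether \<open>x\<close> lies in
  the ball of radius \<open>(1/2)^n\<close> around \<open>xs k\<close>.\<close>
definition ball_code :: "(nat \<Rightarrow> 'a::metric_space) \<Rightarrow> 'a \<Rightarrow> real" where
  "ball_code xs x = (\<Sum>j. if dist x (xs (snd (prod_decode j))) < (1/2)^(fst (prod_decode j))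
                          then 2 / 4 ^ Suc j else 0)"

definition code_centre :: "real \<Rightarrow> nat \<Rightarrow> nat" where
  "code_centre y n = (LEAST k. quaternary_digit y (prod_encode (n, k)))"

text \<open>Consecutive centres are only accepted if they are close, so that the sequence is
  Cauchy for every real \<open>y\<close>, not only for codes of points.\<close>
primrec decode_seq :: "(nat \<Rightarrow> 'a::metric_space) \<Rightarrow> real \<Rightarrow> nat \<Rightarrow> 'a" where
  "decode_seq xs y 0 = xs (code_centre y 0)"
| "decode_seq xs y (Suc n) =
     (if dist (xs (code_centre y (Suc n))) (decode_seq xs y n) < 2 * (1/2)^n
      then xs (code_centre y (Suc n)) else decode_seq xs y n)"

definition ball_decode :: "(nat \<Rightarrow> 'a::metric_space) \<Rightarrow> real \<Rightarrow> 'a" where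
  "ball_decode xs y = lim (decode_seq xs y)"

lemma quaternary_digit_ball_code:
  "quaternary_digit (ball_code xs x) (prod_encode (n, k)) \<longleftrightarrow> dist x (xs k) < (1/2)^n"
  unfolding ball_code_def by (simp add: quaternary_digit_suminf)

lemma ball_code_measurable:
  fixes xs :: "nat \<Rightarrow> 'a::{metric_space, second_countable_topology}"
  shows "ball_code xs \<in> borel_measurable borel"
  unfolding ball_code_def by measurable

lemma code_centre_measurable [measurable]:
  "(\<lambda>y. code_centre y n) \<in> borel \<rightarrow>\<^sub>M count_space UNIV"
  unfolding code_centre_def quaternary_digit_def frac_def
  by (rule measurable_Least) measurable

lemma decode_seq_measurable:
  fixes xs :: "nat \<Rightarrow> 'a::{metric_space, second_countable_topology}"
  shows "(\<lambda>y. decode_seq xs y n) \<in> borel_measurable borel"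
proof (induction n)
  case (Suc n)
  note [measurable] = Suc
  show ?case by simp measurable
qed simp

lemma decode_seq_convergent:
  fixes xs :: "nat \<Rightarrow> 'a::complete_space"
  shows "decode_seq xs y \<longlonglongrightarrow> ball_decode xs y"
proof -
  have "Cauchy (decode_seq xs y)"
    by (rule Cauchy_if_dist_Suc_le_geometric) (auto simp: dist_commute less_imp_le)
  then show ?thesis
    unfolding ball_decode_def using Cauchy_convergent_iff convergent_LIMSEQ_iff by blast
qed

lemma ball_decode_measurable:
  fixes xs :: "nat \<Rightarrow> 'a::polish_space"
  shows "ball_decode xs \<in> borel_measurable borel"
  by (rule borel_measurable_LIMSEQ_metric[OF decode_seq_measurable decode_seq_convergent])

lemma ball_decode_ball_code:
  fixes xs :: "nat \<Rightarrow> 'a::complete_space"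
  assumes dense: "\<And>x e. e > 0 \<Longrightarrow> \<exists>k. dist x (xs k) < e"
  shows "ball_decode xs (ball_code xs x) = x"
proof -
  let ?y = "ball_code xs x"
  have centre_close: "dist x (xs (code_centre ?y n)) < (1/2)^n" for n
  proof -
    obtain k where "dist x (xs k) < (1/2)^n" using dense[of "(1/2)^n"] by auto
    then have "quaternary_digit ?y (prod_encode (n, k))" by (simp add: quaternary_digit_ball_code)
    then have "quaternary_digit ?y (prod_encode (n, code_centre ?y n))"
      unfolding code_centre_def by (rule LeastI)
    then show ?thesis by (simp add: quaternary_digit_ball_code)
  qed
  have seq_centre: "decode_seq xs ?y n = xs (code_centre ?y n)" for n
  proof (induction n)
    case (Suc n)
    have "dist (xs (code_centre ?y (Suc n))) (xs (code_centre ?y n))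
        \<le> dist x (xs (code_centre ?y (Suc n))) + dist x (xs (code_centre ?y n))"
      by (rule dist_triangle3)
    also have "\<dots> < (1/2)^Suc n + (1/2)^n"
      using centre_close[of n] centre_close[of "Suc n"] by linarith
    also have "\<dots> \<le> 2 * (1/2)^n" by simp
    finally show ?case using Suc by simp
  qed simp
  have "decode_seq xs ?y \<longlonglongrightarrow> x"
  proof (rule metric_LIMSEQ_I)
    fix r :: real assume "0 < r"
    then obtain N where N: "(1/2::real)^N < r" using real_arch_pow_inv[of r "1/2"] by auto
    have "dist (decode_seq xs ?y n) x < r" if "N \<le> n" for n
    proof -
      have "(1/2::real)^n \<le> (1/2)^N" using that by (simp add: power_decreasing)
      then have "dist x (xs (code_centre ?y n)) < r" using centre_close[of n] N by linarith
      then show ?thesis by (simp add: seq_centre dist_commute)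
    qed
    then show "\<exists>N. \<forall>n\<ge>N. dist (decode_seq xs ?y n) x < r" by blast
  qed
  then show ?thesis using decode_seq_convergent LIMSEQ_unique by blast
qed

lemma countable_dense_sequence:
  obtains xs :: "nat \<Rightarrow> 'a::{metric_space, second_countable_topology}"
  where "\<And>x e. e > 0 \<Longrightarrow> \<exists>k. dist x (xs k) < e"
proof -
  obtain D :: "'a set" where D: "countable D" "\<And>X. open X \<Longrightarrow> X \<noteq> {} \<Longrightarrow> \<exists>d\<in>D. d \<in> X"
    using countable_dense_setE by blast
  have "\<exists>k. dist x (from_nat_into D k) < e" if "e > 0" for x e
  proof -
    have "\<exists>d\<in>D. d \<in> ball x e" using D(2)[of "ball x e"] that by auto
    then obtain d where "d \<in> D" "d \<in> ball x e" by blast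
    then show ?thesis using from_nat_into_surj[OF D(1) \<open>d \<in> D\<close>] by (auto simp: dist_commute)
  qed
  then show thesis using that by blast
qed

lemma polish_space_borel_embedding_real:
  obtains h :: "'a::polish_space \<Rightarrow> real" and g
  where "h \<in> borel_measurable borel" "g \<in> borel_measurable borel" "\<And>x. g (h x) = x"
proof -
  obtain xs :: "nat \<Rightarrow> 'a" where "\<And>x e. e > 0 \<Longrightarrow> \<exists>k. dist x (xs k) < e"
    using countable_dense_sequence by blast
  then show thesis
    using that ball_code_measurable ball_decode_measurable ball_decode_ball_code by blast
qed

text \<open>The quantile function is set to 0 outside \<open>(0, 1)\<close>, where the library's
  \<open>Inf {x. t \<le> cdf N x}\<close> is a junk value.\<close>
definition quantile :: "real measure \<Rightarrow> real \<Rightarrow> real" where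
  "quantile N t = (if t \<in> {0<..<1} then Inf {x. t \<le> cdf N x} else 0)"

lemma quantile_measurable:
  assumes "real_distribution N"
  shows "quantile N \<in> borel_measurable borel"
proof -
  interpret cdf_distribution N unfolding cdf_distribution_def by (rule assms)
  have "(\<lambda>t. Inf {x. t \<le> cdf N x}) \<in> borel_measurable (restrict_space borel {0<..<1})"
    by (rule measurable_CI)
  then show ?thesis
    unfolding quantile_def by (subst (asm) measurable_restrict_space_iff) auto
qed

lemma emeasure_distr_unitI:
  assumes [measurable]: "f \<in> borel_measurable borel" "A \<in> sets borel"
  shows "emeasure (distr unitI borel f) A = emeasure lborel (f -` A \<inter> {0<..<1})"
proof -
  have f_unitI: "f \<in> measurable unitI borel"
    unfolding unitI_def by (rule measurable_restrict_space1) (simp add: measurable_lborel1)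
  have "emeasure (distr unitI borel f) A = emeasure lborel (f -` A \<inter> {0..<1})"
    using emeasure_distr[OF f_unitI, of A]
    by (simp add: unitI_def emeasure_restrict_space space_restrict_space)
  also have "\<dots> = emeasure lborel (f -` A \<inter> {0<..<1})"
    by (rule emeasure_eq_AE) (use AE_lborel_singleton[of 0] in \<open>auto elim!: eventually_mono\<close>)
  finally show ?thesis .
qed

lemma quantile_parameters:
  assumes "real_distribution N"
  shows "quantile N \<in> parameters N"
proof -
  interpret cdf_distribution N unfolding cdf_distribution_def by (rule assms)
  note [measurable] = quantile_measurable[OF assms]
  have I: "(\<lambda>t. Inf {x. t \<le> cdf N x}) \<in> restrict_space lborel {0<..<1} \<rightarrow>\<^sub>M borel"
    using measurable_CI by (simp add: measurable_lborel1 measurable_restrict_space_iff)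
  have "distr unitI borel (quantile N) = N"
  proof (rule measure_eqI)
    fix A assume "A \<in> sets (distr unitI borel (quantile N))"
    then have [measurable]: "A \<in> sets borel" by simp
    have "emeasure (distr unitI borel (quantile N)) A
        = emeasure (restrict_space lborel {0<..<1}) ((\<lambda>t. Inf {x. t \<le> cdf N x}) -` A
            \<inter> space (restrict_space lborel {0<..<1}))"
      by (subst emeasure_restrict_space)
        (auto simp: emeasure_distr_unitI space_restrict_space quantile_def
          intro!: arg_cong[where f="emeasure lborel"])
    also have "\<dots> = emeasure N A"
      using emeasure_distr[OF I, of A] distr_I_eq_M by simp
    finally show "emeasure (distr unitI borel (quantile N)) A = emeasure N A" .
  qed simp
  then show ?thesis
    unfolding parameters_def unitI_def
    by (auto intro: measurable_restrict_space1 simp: measurable_lborel1)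
qed

lemma borel_measurable_fst_prod [measurable]:
  "fst \<in> borel_measurable (borel :: ('a::topological_space \<times> 'b::topological_space) measure)"
  by (intro borel_measurable_continuous_onI continuous_intros)

lemma borel_measurable_snd_prod [measurable]:
  "snd \<in> borel_measurable (borel :: ('a::topological_space \<times> 'b::topological_space) measure)"
  by (intro borel_measurable_continuous_onI continuous_intros)

lemma parameters_distr:
  assumes "\<phi> \<in> parameters M" and [measurable]: "F \<in> borel_measurable borel"
  shows "F \<circ> \<phi> \<in> parameters (distr M borel F)"
proof -
  have [measurable]: "\<phi> \<in> measurable unitI borel" and "distr unitI borel \<phi> = M"
    using assms(1) by (auto simp: parameters_def)
  moreover have "distr unitI borel (F \<circ> \<phi>) = distr (distr unitI borel \<phi>) borel F"
    by (rule distr_distr[symmetric]) measurable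
  ultimately show ?thesis
    unfolding parameters_def by simp
qed

lemma parameters_nonempty:
  fixes M :: "'a::polish_space measure"
  assumes "mm_space M"
  shows "parameters M \<noteq> {}"
proof -
  have sets_M: "sets M = sets borel" and "prob_space M"
    using assms by (auto simp: mm_space_def)
  obtain h :: "'a \<Rightarrow> real" and g
    where h[measurable]: "h \<in> borel_measurable borel"
      and g[measurable]: "g \<in> borel_measurable borel"
      and gh: "\<And>x. g (h x) = x"
    using polish_space_borel_embedding_real by blast
  have h_M: "h \<in> borel_measurable M" unfolding measurable_cong_sets[OF sets_M refl] by simp
  then have "real_distribution (distr M borel h)"
    using prob_space.prob_space_distr[OF \<open>prob_space M\<close>]
    by (auto simp: real_distribution_def real_distribution_axioms_def)
  then have "g \<circ> quantile (distr M borel h) \<in> parameters (distr (distr M borel h) borel g)"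
    by (intro parameters_distr quantile_parameters g)
  also have "distr (distr M borel h) borel g = M"
    using distr_distr[OF _ h_M, of g borel] distr_id2[OF sets_M[symmetric]] by (simp add: comp_def gh)
  finally show ?thesis by blast
qed

lemma pair_parameters_couplings:
  assumes \<phi>: "\<phi> \<in> parameters mX" and \<psi>: "\<psi> \<in> parameters mY"
  shows "distr unitI borel (\<lambda>t. (\<phi> t, \<psi> t)) \<in> couplings mX mY"
proof -
  have [measurable]: "\<phi> \<in> measurable unitI borel" "\<psi> \<in> measurable unitI borel"
    and "distr unitI borel \<phi> = mX" "distr unitI borel \<psi> = mY"
    using assms by (auto simp: parameters_def)
  moreover have "prob_space unitI"
    unfolding unitI_def
    by (rule prob_spaceI) (simp add: emeasure_restrict_space space_restrict_space)
  ultimately show ?thesis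
    unfolding couplings_def
    by (simp add: distr_distr comp_def prob_space.prob_space_distr)
qed

lemma couplings_eq_pair_parameters:
  "couplings mX mY =
     {distr unitI borel (\<lambda>t. (\<phi> t, \<psi> t)) | \<phi> \<psi>. \<phi> \<in> parameters mX \<and> \<psi> \<in> parameters mY}"
proof (intro equalityI subsetI)
  fix \<pi> assume \<pi>: "\<pi> \<in> couplings mX mY"
  then have "mm_space \<pi>" by (simp add: couplings_def mm_space_def)
  then obtain \<kappa> where \<kappa>: "\<kappa> \<in> parameters \<pi>" using parameters_nonempty by blast
  then have "distr unitI borel (\<lambda>t. ((fst \<circ> \<kappa>) t, (snd \<circ> \<kappa>) t)) = \<pi>"
    by (simp add: parameters_def)
  moreover have "fst \<circ> \<kappa> \<in> parameters mX" "snd \<circ> \<kappa> \<in> parameters mY"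
    using parameters_distr[OF \<kappa>, of fst] parameters_distr[OF \<kappa>, of snd] \<pi>
    by (auto simp: couplings_def)
  ultimately show "\<pi> \<in> {distr unitI borel (\<lambda>t. (\<phi> t, \<psi> t)) | \<phi> \<psi>.
      \<phi> \<in> parameters mX \<and> \<psi> \<in> parameters mY}" by blast
qed (auto intro: pair_parameters_couplings)

lemma dKF_distr:
  assumes F: "F \<in> measurable M N"
    and [measurable]: "u \<in> borel_measurable N" "v \<in> borel_measurable N"
  shows "dKF (distr M N F) u v = dKF M (u \<circ> F) (v \<circ> F)"
proof -
  have "measure (distr M N F) {z \<in> space N. e < \<bar>u z - v z\<bar>}
      = measure M {x \<in> space M. e < \<bar>u (F x) - v (F x)\<bar>}" for e
  proof -
    have "{z \<in> space N. e < \<bar>u z - v z\<bar>} \<in> sets N" by measurable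
    then have "measure (distr M N F) {z \<in> space N. e < \<bar>u z - v z\<bar>}
        = measure M (F -` {z \<in> space N. e < \<bar>u z - v z\<bar>} \<inter> space M)"
      by (rule measure_distr[OF F])
    also have "F -` {z \<in> space N. e < \<bar>u z - v z\<bar>} \<inter> space M
        = {x \<in> space M. e < \<bar>u (F x) - v (F x)\<bar>}"
      using measurable_space[OF F] by auto
    finally show ?thesis .
  qed
  then show ?thesis by (simp add: dKF_def)
qed

lemma hausdorff_dist_dKF_distr:
  assumes "F \<in> measurable M N" "U \<subseteq> borel_measurable N" "V \<subseteq> borel_measurable N"
  shows "hausdorff_dist (dKF (distr M N F)) U V
       = hausdorff_dist (dKF M) ((\<lambda>u. u \<circ> F) ` U) ((\<lambda>v. v \<circ> F) ` V)"
  unfolding hausdorff_dist_def image_image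
  using assms by (intro arg_cong2[where f=max] SUP_cong INF_cong refl dKF_distr) auto

lemma lip1_borel_measurable: "lip1 \<subseteq> borel_measurable borel"
  unfolding lip1_def
  by (auto intro: borel_measurable_continuous_onI lipschitz_on_continuous_on)

lemma dconc_pi_distr_pair:
  fixes \<phi> :: "real \<Rightarrow> 'a::polish_space" and \<psi> :: "real \<Rightarrow> 'b::polish_space"
  assumes [measurable]: "\<phi> \<in> measurable unitI borel" "\<psi> \<in> measurable unitI borel"
  shows "dconc_pi (distr unitI borel (\<lambda>t. (\<phi> t, \<psi> t)))
       = hausdorff_dist (dKF unitI) ((\<lambda>f. f \<circ> \<phi>) ` lip1) ((\<lambda>g. g \<circ> \<psi>) ` lip1)"
proof -
  have "(\<lambda>f. f \<circ> fst) ` lip1 \<subseteq> (borel_measurable borel :: ('a \<times> 'b \<Rightarrow> real) set)"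
       "(\<lambda>g. g \<circ> snd) ` lip1 \<subseteq> (borel_measurable borel :: ('a \<times> 'b \<Rightarrow> real) set)"
    using lip1_borel_measurable by auto
  then show ?thesis
    unfolding dconc_pi_def
    by (subst hausdorff_dist_dKF_distr) (auto simp: image_image comp_def)
qed

lemma dconc_eq_INF_pair_parameters:
  fixes mX :: "'a::polish_space measure" and mY :: "'b::polish_space measure"
  shows "dconc mX mY = (INF \<pi>\<in>{distr unitI borel (\<lambda>t. (\<phi> t, \<psi> t))
                                  | \<phi> \<psi>. \<phi> \<in> parameters mX \<and> \<psi> \<in> parameters mY}. dconc_pi \<pi>)"
proof -
  have pair: "dconc_pi (distr unitI borel (\<lambda>t. (\<phi> t, \<psi> t)))
      = hausdorff_dist (dKF unitI) ((\<lambda>f. f \<circ> \<phi>) ` lip1) ((\<lambda>g. g \<circ> \<psi>) ` lip1)"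
    if "\<phi> \<in> parameters mX" "\<psi> \<in> parameters mY" for \<phi> \<psi>
    using that by (intro dconc_pi_distr_pair) (auto simp: parameters_def)
  have "{hausdorff_dist (dKF unitI) ((\<lambda>f. f \<circ> \<phi>) ` lip1) ((\<lambda>g. g \<circ> \<psi>) ` lip1)
          | \<phi> \<psi>. \<phi> \<in> parameters mX \<and> \<psi> \<in> parameters mY}
      = dconc_pi ` {distr unitI borel (\<lambda>t. (\<phi> t, \<psi> t))
          | \<phi> \<psi>. \<phi> \<in> parameters mX \<and> \<psi> \<in> parameters mY}"
  proof (intro equalityI subsetI)
    fix v assume "v \<in> dconc_pi ` {distr unitI borel (\<lambda>t. (\<phi> t, \<psi> t))
        | \<phi> \<psi>. \<phi> \<in> parameters mX \<and> \<psi> \<in> parameters mY}"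
    then obtain \<phi> \<psi> where "\<phi> \<in> parameters mX" "\<psi> \<in> parameters mY"
      and "v = dconc_pi (distr unitI borel (\<lambda>t. (\<phi> t, \<psi> t)))" by blast
    then show "v \<in> {hausdorff_dist (dKF unitI) ((\<lambda>f. f \<circ> \<phi>) ` lip1) ((\<lambda>g. g \<circ> \<psi>) ` lip1)
        | \<phi> \<psi>. \<phi> \<in> parameters mX \<and> \<psi> \<in> parameters mY}"
      using pair by blast
  qed (use pair in force)
  then show ?thesis unfolding dconc_def by simp
qed

theorem proposition5p5:
  fixes mX :: "'a::polish_space measure" and mY :: "'b::polish_space measure"
  assumes "mm_space mX" and "mm_space mY"
  shows "dconc mX mY = (INF \<pi>\<in>couplings mX mY. dconc_pi \<pi>)"
  unfolding couplings_eq_pair_parameters by (rule dconc_eq_INF_pair_parameters)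

end
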